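(* Consider the Distributed Guided Local Search (DGLS) algorithm described in the context, with any manner, evaporation rate and update scope. Fix any round and the cost modifiers $M_{ij}$ current at that round. Consider the game in which each agent $i$ chooses $d_i\in D_i$ and incurs cost $c_i(\tau)=\sum_{j\in\mathcal{N}_i}\mathrm{EffCost}(d_i,j,d_j)$, where $\tau=(d_1,\dots,d_n)$. Then this game is a potential game with potential function $\Phi(\tau)=\frac12\sum_{i}\sum_{j\in\mathcal{N}_i}\mathrm{EffCost}(d_i,j,d_j)$: for every agent $i$, every $\tau$ and every $d_i'\in D_i$, the change in $c_i$ caused by $i$ unilaterally switching from $d_i$ to $d_i'$ equals the corresponding change in $\Phi$.
   Context: A (binary) Distributed Constraint Optimization Problem (DCOP) consists of agents $1,\dots,n$, each controlling one variable $x_i$ with finite domain $D_i$, and binary constraint functions $f_{ij}:D_i\times D_j\to\mathbb{R}_{\ge0}$ with $f_{ji}=f_{ij}^T$; $\mathcal{N}_i$ is the set of neighbors of $i$. Write $\check f_{ij}=\min f_{ij}$, $\hat f_{ij}=\max f_{ij}$. Tables held by agent $i$ are indexed with $i$'s own value first and the neighbor's value second. DGLS is parameterized by a manner (additive or multiplicative), an evaporation rate $\gamma$, and a scope ($cel$, $tab$, $row$, $col$). Each agent $i$ keeps, for each $j\in\mathcal{N}_i$, a cost modifier $M_{ij}$ (a $|D_i|\times|D_j|$ real matrix), initialized to $0$. The effective cost is $\mathrm{EffCost}(d_i,j,d_j)=f_{ij}(d_i,d_j)+M_{ij}(d_i,d_j)$ (additive) or $f_{ij}(d_i,d_j)\cdot[1+M_{ij}(d_i,d_j)]$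 (multiplicative), where $M_{ij}$ is the modifier held by agent $i$. Initially each agent picks a random value $d_i\in D_i$ and sends it to its neighbors. Rounds are synchronous; in each round agent $i$: (1) sets $\bar P_i=\emptyset$ and receives the neighbors' current values $d_j$; (2) computes $d_i^*\in\arg\min_{d\in D_i}\sum_{j\in\mathcal{N}_i}\mathrm{EffCost}(d,j,d_j)$ and gain $\Delta_i=\sum_{j}[\mathrm{EffCost}(d_i,j,d_j)-\mathrm{EffCost}(d_i^*,j,d_j)]$, and exchanges gains with neighbors; (3) if $\Delta_i>0$ and $\Delta_i$ is the best improvement among itself and its neighbors, it sets $d_i\gets d_i^*$; otherwise, if no neighbor can improve (all neighbors' gains are $\le 0$), then for each $j\in\mathcal{N}_i$ it declares $f_{ij}$ violated with probability $\eta=\frac{f_{ij}(d_i,d_j)-\check f_{ij}}{\hat f_{ij}-\check f_{ij}}$, and for each violated one adds $j$ to $\bar P_i$ and sends a SYNC message to $j$; (4) lets $\tilde P_i$ be the set of neighbors from which it received SYNC this round; (5) for each $j\in\mathcal{N}_i$: first evaporates, $M_{ij}\gets\gamma M_{ij}$ entrywise, then updates with current values $d_i,d_j$: scope $cel$: if $j\in\bar P_i\cup\tilde P_i$, $M_{ij}(d_i,d_j)\mathrel{+}=1$; scope $tab$: if $j\in\bar P_i\cup\tilde P_i$, all entries of $M_{ij}$ are increased by 1; scope $row$: if $j\in\bar P_i$, $M_{ij}(d_i,d_j')\mathrel{+}=1$ for all $d_j'$; if $j\in\tilde P_i$, $M_{ij}(d_i',d_j)\mathrel{+}=1$ for all $d_i'$;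 if $j\in\bar P_i\cap\tilde P_i$, $M_{ij}(d_i,d_j)\mathrel{-}=1$; scope $col$: same as $row$ with the roles exchanged (if $j\in\bar P_i$ increment column $d_j$, if $j\in\tilde P_i$ increment row $d_i$, and subtract 1 at $(d_i,d_j)$ if both); (6) sends its value $d_i$ to its neighbors. *)

theory Defs
  imports Complex_Main
begin

datatype manner = Additive | Multiplicative
datatype scope = Cel | Tab | Row | Col

type_synonym ('ag, 'v) tables = "'ag \<Rightarrow> 'ag \<Rightarrow> 'v \<Rightarrow> 'v \<Rightarrow> real"

text \<open>Effective cost EffCost(x, j, y) as seen by agent i, using the modifier M i j held by i.\<close>
definition eff :: "manner \<Rightarrow> ('ag, 'v) tables \<Rightarrow> ('ag, 'v) tables \<Rightarrow> 'ag \<Rightarrow> 'v \<Rightarrow> 'ag \<Rightarrow> 'v \<Rightarrow> real" where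
  "eff mn f M i x j y =
     (case mn of Additive \<Rightarrow> f i j x y + M i j x y
               | Multiplicative \<Rightarrow> f i j x y * (1 + M i j x y))"

definition local_cost :: "manner \<Rightarrow> ('ag \<Rightarrow> 'ag set) \<Rightarrow> ('ag, 'v) tables \<Rightarrow> ('ag, 'v) tables
    \<Rightarrow> 'ag \<Rightarrow> 'v \<Rightarrow> ('ag \<Rightarrow> 'v) \<Rightarrow> real" where
  "local_cost mn N f M i x d = (\<Sum>j\<in>N i. eff mn f M i x j (d j))"

definition agent_cost :: "manner \<Rightarrow> ('ag \<Rightarrow> 'ag set) \<Rightarrow> ('ag, 'v) tables \<Rightarrow> ('ag, 'v) tables
    \<Rightarrow> 'ag \<Rightarrow> ('ag \<Rightarrow> 'v) \<Rightarrow> real" where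
  "agent_cost mn N f M i \<tau> = local_cost mn N f M i (\<tau> i) \<tau>"

definition potential :: "manner \<Rightarrow> ('ag::finite \<Rightarrow> 'ag set) \<Rightarrow> ('ag, 'v) tables \<Rightarrow> ('ag, 'v) tables
    \<Rightarrow> ('ag \<Rightarrow> 'v) \<Rightarrow> real" where
  "potential mn N f M \<tau> = (1/2) * (\<Sum>i\<in>UNIV. \<Sum>j\<in>N i. eff mn f M i (\<tau> i) j (\<tau> j))"

definition gain :: "manner \<Rightarrow> ('ag \<Rightarrow> 'ag set) \<Rightarrow> ('ag \<Rightarrow> 'v set) \<Rightarrow> ('ag, 'v) tables \<Rightarrow> ('ag, 'v) tables
    \<Rightarrow> ('ag \<Rightarrow> 'v) \<Rightarrow> 'ag \<Rightarrow> real" where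
  "gain mn N D f M d i =
     local_cost mn N f M i (d i) d - Min ((\<lambda>x. local_cost mn N f M i x d) ` D i)"

definition eta :: "('ag \<Rightarrow> 'v set) \<Rightarrow> ('ag, 'v) tables \<Rightarrow> 'ag \<Rightarrow> 'ag \<Rightarrow> 'v \<Rightarrow> 'v \<Rightarrow> real" where
  "eta D f i j x y =
     (let lo = Min {f i j a b | a b. a \<in> D i \<and> b \<in> D j};
          hi = Max {f i j a b | a b. a \<in> D i \<and> b \<in> D j}
      in (f i j x y - lo) / (hi - lo))"

text \<open>Modifier update (evaporation followed by scope update) of M i j, with the
  current values x (own) and y (neighbour), own violated set Pb and received set Pt.\<close>
definition upd :: "scope \<Rightarrow> real \<Rightarrow> ('v \<Rightarrow> 'v \<Rightarrow> real) \<Rightarrow> bool \<Rightarrow> bool \<Rightarrow> 'v \<Rightarrow> 'v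
    \<Rightarrow> ('v \<Rightarrow> 'v \<Rightarrow> real)" where
  "upd sc \<gamma> Mij inPb inPt x y = (\<lambda>a b. \<gamma> * Mij a b +
     (case sc of
        Cel \<Rightarrow> (if (inPb \<or> inPt) \<and> a = x \<and> b = y then 1 else 0)
      | Tab \<Rightarrow> (if inPb \<or> inPt then 1 else 0)
      | Row \<Rightarrow> (if inPb \<and> a = x then 1 else 0) + (if inPt \<and> b = y then 1 else 0)
               - (if inPb \<and> inPt \<and> a = x \<and> b = y then 1 else 0)
      | Col \<Rightarrow> (if inPb \<and> b = y then 1 else 0) + (if inPt \<and> a = x then 1 else 0)
               - (if inPb \<and> inPt \<and> a = x \<and> b = y then 1 else 0)))"

text \<open>Random choices (tie-breaking, choice of argmin, violation declarations) are
  modelled nondeterministically: any outcome with positive probability is allowed.\<close>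
definition dgls_step :: "manner \<Rightarrow> scope \<Rightarrow> real \<Rightarrow> ('ag \<Rightarrow> 'ag set) \<Rightarrow> ('ag \<Rightarrow> 'v set)
    \<Rightarrow> ('ag, 'v) tables \<Rightarrow> ('ag \<Rightarrow> 'v) \<times> ('ag, 'v) tables \<Rightarrow> ('ag \<Rightarrow> 'v) \<times> ('ag, 'v) tables \<Rightarrow> bool" where
  "dgls_step mn sc \<gamma> N D f s s' =
    (case s of (d, M) \<Rightarrow> case s' of (d', M') \<Rightarrow>
     (\<exists>S Pb.
        \<comment> \<open>step 3: movers S are agents with positive, (weakly) best gain in their neighbourhood;
            strictly best positive gain forces a move\<close>
        (\<forall>i. i \<in> S \<longrightarrow> gain mn N D f M d i > 0 \<and> (\<forall>j\<in>N i. gain mn N D f M d j \<le> gain mn N D f M d i)) \<and>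
        (\<forall>i. gain mn N D f M d i > 0 \<and> (\<forall>j\<in>N i. gain mn N D f M d j < gain mn N D f M d i) \<longrightarrow> i \<in> S) \<and>
        (\<forall>i. i \<in> S \<longrightarrow> d' i \<in> D i \<and>
              (\<forall>x\<in>D i. local_cost mn N f M i (d' i) d \<le> local_cost mn N f M i x d)) \<and>
        (\<forall>i. i \<notin> S \<longrightarrow> d' i = d i) \<and>
        \<comment> \<open>violation declarations: only by non-movers none of whose neighbours can improve,
            and only for constraints with positive violation probability\<close>
        (\<forall>i. Pb i \<subseteq> N i) \<and>
        (\<forall>i. Pb i \<noteq> {} \<longrightarrow> i \<notin> S \<and> (\<forall>j\<in>N i. gain mn N D f M d j \<le> 0)) \<and>
        (\<forall>i j. j \<in> Pb i \<longrightarrow> eta D f i j (d i) (d j) > 0) \<and>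
        \<comment> \<open>step 5: modifier update with current own value d' i and received value d j\<close>
        (\<forall>i j. M' i j = (if j \<in> N i
             then upd sc \<gamma> (M i j) (j \<in> Pb i) (i \<in> Pb j) (d' i) (d j)
             else M i j))))"

end

theory Submission
  imports Defs
begin

text \<open>The modifiers stay transposition-symmetric, \<open>M j i b a = M i j a b\<close> on every edge: an update
  depends on the current values only when a violation is declared on the edge, and then neither
  endpoint moves in that round, because a declarer does not move and none of its neighbours can
  improve. Hence EffCost is a symmetric edge weight, \<open>\<Phi>\<close> is its sum over undirected edges, and
  changing \<open>d\<^sub>i\<close> alters only the edges at \<open>i\<close>, whose total is \<open>c\<^sub>i\<close>.\<close>

definition sym_on_edges :: "('ag \<Rightarrow> 'ag set) \<Rightarrow> ('ag, 'v) tables \<Rightarrow> bool" where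
  "sym_on_edges N M \<longleftrightarrow> (\<forall>i j a b. j \<in> N i \<longrightarrow> M j i b a = M i j a b)"

lemma upd_transpose:
  "upd sc \<gamma> (\<lambda>b a. Mij a b) q p y x b a = upd sc \<gamma> Mij p q x y a b"
  by (cases sc) (auto simp: upd_def)

lemma upd_no_flags: "upd sc \<gamma> Mij False False x y = (\<lambda>a b. \<gamma> * Mij a b)"
  by (cases sc) (simp_all add: upd_def)

lemma dgls_step_modifiers:
  assumes "dgls_step mn sc \<gamma> N D f (d, M) (d', M')"
  obtains Pb where "\<And>i j. j \<in> Pb i \<Longrightarrow> j \<in> N i \<Longrightarrow> d' i = d i \<and> d' j = d j"
    and "\<And>i j. M' i j = (if j \<in> N i
           then upd sc \<gamma> (M i j) (j \<in> Pb i) (i \<in> Pb j) (d' i) (d j) else M i j)"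
proof -
  let ?g = "gain mn N D f M d"
  from assms obtain S Pb where
    movers: "\<And>i. i \<in> S \<Longrightarrow> ?g i > 0"
    and stay: "\<And>i. i \<notin> S \<Longrightarrow> d' i = d i"
    and declarers: "\<And>i. Pb i \<noteq> {} \<Longrightarrow> i \<notin> S \<and> (\<forall>j\<in>N i. ?g j \<le> 0)"
    and M': "\<And>i j. M' i j = (if j \<in> N i
           then upd sc \<gamma> (M i j) (j \<in> Pb i) (i \<in> Pb j) (d' i) (d j) else M i j)"
    unfolding dgls_step_def by auto
  have "d' i = d i \<and> d' j = d j" if "j \<in> Pb i" "j \<in> N i" for i j
  proof -
    have "i \<notin> S" "?g j \<le> 0" using declarers[of i] that by auto
    with movers[of j] stay show ?thesis by force
  qed
  then show thesis using M' by (rule that)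
qed

lemma dgls_step_sym_on_edges:
  assumes step: "dgls_step mn sc \<gamma> N D f (d, M) (d', M')"
    and N_sym: "\<forall>i j. j \<in> N i \<longleftrightarrow> i \<in> N j"
    and M_sym: "sym_on_edges N M"
  shows "sym_on_edges N M'"
  unfolding sym_on_edges_def
proof (intro allI impI)
  fix i j a b assume ij: "j \<in> N i"
  then have ji: "i \<in> N j" using N_sym by blast
  obtain Pb where still: "\<And>i j. j \<in> Pb i \<Longrightarrow> j \<in> N i \<Longrightarrow> d' i = d i \<and> d' j = d j"
    and M': "\<And>i j. M' i j = (if j \<in> N i
           then upd sc \<gamma> (M i j) (j \<in> Pb i) (i \<in> Pb j) (d' i) (d j) else M i j)"
    using dgls_step_modifiers[OF step] by blast
  have M_ji: "M j i = (\<lambda>b a. M i j a b)" using M_sym ij by (auto simp: sym_on_edges_def fun_eq_iff)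
  show "M' j i b a = M' i j a b"
  proof (cases "j \<in> Pb i \<or> i \<in> Pb j")
    case True
    then have "d' i = d i" "d' j = d j" using still ij ji by blast+
    then show ?thesis
      using ij ji upd_transpose[of sc \<gamma> "M i j" "i \<in> Pb j" "j \<in> Pb i" "d j" "d i" b a]
      by (simp add: M' M_ji)
  next
    case False
    then show ?thesis using ij ji by (simp add: M' M_ji upd_no_flags)
  qed
qed

lemma dgls_reachable_sym_on_edges:
  assumes "(dgls_step mn sc \<gamma> N D f)\<^sup>*\<^sup>* (d0, (\<lambda>_ _ _ _. 0)) (d, M)"
    and N_sym: "\<forall>i j. j \<in> N i \<longleftrightarrow> i \<in> N j"
  shows "sym_on_edges N M"
proof -
  have "sym_on_edges N (snd s)" if "(dgls_step mn sc \<gamma> N D f)\<^sup>*\<^sup>* (d0, (\<lambda>_ _ _ _. 0)) s" for s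
    using that
  proof (induction rule: rtranclp_induct)
    case base
    show ?case by (simp add: sym_on_edges_def)
  next
    case (step s s')
    then show ?case
      using dgls_step_sym_on_edges[OF _ N_sym, of mn sc \<gamma> D f "fst s" "snd s" "fst s'" "snd s'"]
      by simp
  qed
  from this[OF assms(1)] show ?thesis by simp
qed

lemma sum_neighbours_split:
  fixes g :: "'a::finite \<Rightarrow> 'a \<Rightarrow> 'b::comm_semiring_1"
  assumes N_sym: "\<forall>i j. j \<in> N i \<longleftrightarrow> i \<in> N j"
    and N_irrefl: "\<forall>i. i \<notin> N i"
    and g_sym: "\<And>k j. j \<in> N k \<Longrightarrow> g k j = g j k"
  shows "(\<Sum>k\<in>UNIV. \<Sum>j\<in>N k. g k j) =
     2 * (\<Sum>j\<in>N i. g i j) + (\<Sum>k\<in>-{i}. \<Sum>j\<in>N k - {i}. g k j)"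
proof -
  have inner: "(\<Sum>j\<in>N k. g k j) = (if i \<in> N k then g k i else 0) + (\<Sum>j\<in>N k - {i}. g k j)"
    for k
    by (cases "i \<in> N k") (simp_all add: sum.remove)
  have "(\<Sum>k\<in>-{i}. if i \<in> N k then g k i else 0) = (\<Sum>k\<in>{k\<in>-{i}. i \<in> N k}. g k i)"
    by (rule sum.inter_filter[symmetric]) simp
  also have "{k\<in>-{i}. i \<in> N k} = N i"
    using N_sym N_irrefl by blast
  also have "(\<Sum>k\<in>N i. g k i) = (\<Sum>j\<in>N i. g i j)"
    by (rule sum.cong[OF refl g_sym[symmetric]])
  finally have edges_at_i: "(\<Sum>k\<in>-{i}. if i \<in> N k then g k i else 0) = (\<Sum>j\<in>N i. g i j)" .
  have "(\<Sum>k\<in>UNIV. \<Sum>j\<in>N k. g k j) = (\<Sum>j\<in>N i. g i j) + (\<Sum>k\<in>UNIV - {i}. \<Sum>j\<in>N k. g k j)"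
    by (rule sum.remove) simp_all
  also have "(\<Sum>k\<in>UNIV - {i}. \<Sum>j\<in>N k. g k j)
      = (\<Sum>k\<in>-{i}. (if i \<in> N k then g k i else 0) + (\<Sum>j\<in>N k - {i}. g k j))"
    unfolding Compl_eq_Diff_UNIV[symmetric] by (rule sum.cong[OF refl inner])
  also have "\<dots> = (\<Sum>j\<in>N i. g i j) + (\<Sum>k\<in>-{i}. \<Sum>j\<in>N k - {i}. g k j)"
    by (simp only: sum.distrib edges_at_i)
  finally show ?thesis by (simp only: mult_2 add.assoc)
qed

lemma eff_sym:
  assumes "f j k b a = f k j a b" and "M j k b a = M k j a b"
  shows "eff mn f M j b k a = eff mn f M k a j b"
  using assms by (cases mn) (simp_all add: eff_def)

lemma potential_eq_agent_cost_plus_rest: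
  fixes N :: "'ag::finite \<Rightarrow> 'ag set"
  assumes N_sym: "\<forall>i j. j \<in> N i \<longleftrightarrow> i \<in> N j"
    and N_irrefl: "\<forall>i. i \<notin> N i"
    and f_sym: "\<forall>i j a b. j \<in> N i \<and> a \<in> D i \<and> b \<in> D j \<longrightarrow> f j i b a = f i j a b"
    and M_sym: "sym_on_edges N M"
    and t: "\<forall>k. t k \<in> D k"
  shows "potential mn N f M t = agent_cost mn N f M i t
      + (1/2) * (\<Sum>k\<in>-{i}. \<Sum>j\<in>N k - {i}. eff mn f M k (t k) j (t j))"
proof -
  have "eff mn f M k (t k) j (t j) = eff mn f M j (t j) k (t k)" if "j \<in> N k" for k j
    using eff_sym f_sym M_sym t that unfolding sym_on_edges_def by metis
  from sum_neighbours_split[OF N_sym N_irrefl this, where i = i] show ?thesis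
    unfolding potential_def agent_cost_def local_cost_def by simp
qed

theorem theorem2:
  fixes mn :: manner and sc :: scope and \<gamma> :: real
    and N :: "'ag::finite \<Rightarrow> 'ag set" and D :: "'ag \<Rightarrow> 'v set"
    and f :: "('ag, 'v) tables"
    and d0 d \<tau> :: "'ag \<Rightarrow> 'v" and M :: "('ag, 'v) tables"
    and i :: 'ag and x :: 'v
  assumes N_sym: "\<forall>i j. j \<in> N i \<longleftrightarrow> i \<in> N j"
    and N_irrefl: "\<forall>i. i \<notin> N i"
    and D_fin: "\<forall>i. finite (D i)" and D_ne: "\<forall>i. D i \<noteq> {}"
    and f_sym: "\<forall>i j a b. j \<in> N i \<and> a \<in> D i \<and> b \<in> D j \<longrightarrow> f j i b a = f i j a b"
    and f_nonneg: "\<forall>i j a b. j \<in> N i \<and> a \<in> D i \<and> b \<in> D j \<longrightarrow> f i j a b \<ge> 0"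
    and init: "\<forall>k. d0 k \<in> D k"
    and reach: "(dgls_step mn sc \<gamma> N D f)\<^sup>*\<^sup>* (d0, (\<lambda>_ _ _ _. 0)) (d, M)"
    and tau: "\<forall>k. \<tau> k \<in> D k"
    and x: "x \<in> D i"
  shows "agent_cost mn N f M i (\<tau>(i := x)) - agent_cost mn N f M i \<tau>
         = potential mn N f M (\<tau>(i := x)) - potential mn N f M \<tau>"
proof -
  have M_sym: "sym_on_edges N M"
    using dgls_reachable_sym_on_edges[OF reach N_sym] .
  have tau': "\<forall>k. (\<tau>(i := x)) k \<in> D k" using tau x by simp
  have rest_unchanged:
    "(\<Sum>k\<in>-{i}. \<Sum>j\<in>N k - {i}. eff mn f M k ((\<tau>(i := x)) k) j ((\<tau>(i := x)) j))
     = (\<Sum>k\<in>-{i}. \<Sum>j\<in>N k - {i}. eff mn f M k (\<tau> k) j (\<tau> j))"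
    by (intro sum.cong) auto
  show ?thesis
    using potential_eq_agent_cost_plus_rest[OF N_sym N_irrefl f_sym M_sym, of _ mn i]
      tau tau' rest_unchanged
    by (simp del: fun_upd_apply)
qed

end
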